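(* Let $G$ be a graph with at least one vertex and $f:V(G)\to\{1,2,3,\dots\}$. Then $2\gamma_{gr}(G)=\gamma_{gr}^{\times 2}(G_f)$.
   Context: Graphs are finite, simple, undirected; $N[v]$ is the closed neighborhood. $G_f$ is the graph with vertex set $\bigcup_{v\in V(G)}\{v^1,\dots,v^{f(v)+1}\}$ in which $v^iu^j$ is an edge iff either $v=u$ and $i\neq j$, or $vu\in E(G)$ (i.e., each $v$ is replaced by $f(v)+1$ pairwise true twins). A sequence $(v_1,\dots,v_k)$ of distinct vertices is legal if $N[v_i]\setminus\bigcup_{j<i}N[v_j]\neq\emptyset$ for every $i\ge2$, and a dominating sequence if moreover its vertex set is dominating; $\gamma_{gr}(G)$ is the maximum length of a dominating sequence. A sequence $(v_1,\dots,v_k)$ of distinct vertices is a double neighborhood sequence if for each $i$ some $u\in N[v_i]$ satisfies $|\{j<i:u\in N[v_j]\}|\le1$, and a double dominating sequence if moreover every vertex $w$ has $|N[w]\cap\{v_1,\dots,v_k\}|\ge 2$; for a graph without isolated vertices $\gamma_{gr}^{\times 2}$ is the maximum length of a double dominating sequence. *)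

theory Defs
  imports Main
begin

definition simple_graph :: "'a set \<Rightarrow> ('a \<Rightarrow> 'a \<Rightarrow> bool) \<Rightarrow> bool" where
  "simple_graph V E \<longleftrightarrow> finite V \<and> (\<forall>u v. E u v \<longrightarrow> u \<in> V \<and> v \<in> V)
     \<and> (\<forall>u v. E u v \<longrightarrow> E v u) \<and> (\<forall>v. \<not> E v v)"

definition cnbh :: "'a set \<Rightarrow> ('a \<Rightarrow> 'a \<Rightarrow> bool) \<Rightarrow> 'a \<Rightarrow> 'a set" where
  "cnbh V E v = {u \<in> V. E v u} \<union> {v}"

text \<open>Sequences are lists, indexed from 0 (so the paper's i \<ge> 2 is i \<ge> 1 here).\<close>
definition legal_seq :: "'a set \<Rightarrow> ('a \<Rightarrow> 'a \<Rightarrow> bool) \<Rightarrow> 'a list \<Rightarrow> bool" where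
  "legal_seq V E s \<longleftrightarrow> distinct s \<and> set s \<subseteq> V \<and>
     (\<forall>i < length s. 1 \<le> i \<longrightarrow> cnbh V E (s ! i) - (\<Union>j<i. cnbh V E (s ! j)) \<noteq> {})"

definition dominating_seq :: "'a set \<Rightarrow> ('a \<Rightarrow> 'a \<Rightarrow> bool) \<Rightarrow> 'a list \<Rightarrow> bool" where
  "dominating_seq V E s \<longleftrightarrow> legal_seq V E s \<and> (\<forall>w \<in> V. \<exists>v \<in> set s. w \<in> cnbh V E v)"

definition gamma_gr :: "'a set \<Rightarrow> ('a \<Rightarrow> 'a \<Rightarrow> bool) \<Rightarrow> nat" where
  "gamma_gr V E = Max (length ` {s. dominating_seq V E s})"

definition double_nbh_seq :: "'a set \<Rightarrow> ('a \<Rightarrow> 'a \<Rightarrow> bool) \<Rightarrow> 'a list \<Rightarrow> bool" where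
  "double_nbh_seq V E s \<longleftrightarrow> distinct s \<and> set s \<subseteq> V \<and>
     (\<forall>i < length s. \<exists>u \<in> cnbh V E (s ! i). card {j. j < i \<and> u \<in> cnbh V E (s ! j)} \<le> 1)"

definition double_dominating_seq :: "'a set \<Rightarrow> ('a \<Rightarrow> 'a \<Rightarrow> bool) \<Rightarrow> 'a list \<Rightarrow> bool" where
  "double_dominating_seq V E s \<longleftrightarrow> double_nbh_seq V E s \<and>
     (\<forall>w \<in> V. card (cnbh V E w \<inter> set s) \<ge> 2)"

text \<open>Only meaningful for graphs without isolated vertices.\<close>
definition gamma_gr2 :: "'a set \<Rightarrow> ('a \<Rightarrow> 'a \<Rightarrow> bool) \<Rightarrow> nat" where
  "gamma_gr2 V E = Max (length ` {s. double_dominating_seq V E s})"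

text \<open>The graph G_f: vertex v replaced by true twins (v,1),...,(v,f v + 1).\<close>
definition blowup_V :: "'a set \<Rightarrow> ('a \<Rightarrow> nat) \<Rightarrow> ('a \<times> nat) set" where
  "blowup_V V f = {(v, i). v \<in> V \<and> 1 \<le> i \<and> i \<le> f v + 1}"

definition blowup_E :: "'a set \<Rightarrow> ('a \<Rightarrow> 'a \<Rightarrow> bool) \<Rightarrow> ('a \<Rightarrow> nat)
    \<Rightarrow> 'a \<times> nat \<Rightarrow> 'a \<times> nat \<Rightarrow> bool" where
  "blowup_E V E f x y \<longleftrightarrow> x \<in> blowup_V V f \<and> y \<in> blowup_V V f \<and>
     ((fst x = fst y \<and> snd x \<noteq> snd y) \<or> E (fst x) (fst y))"

end

theory Submission
  imports Defs
begin

(* A dominating sequence (v_1, ..., v_k) of G yields the double dominating sequence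
   (v_1^1, v_1^2, ..., v_k^1, v_k^2) of G_f: if w is a private neighbour of v_i, then w^1 is
   dominated by no earlier entry, so it is a footprint of both copies of v_i.
   Conversely, let every entry t_i of a double dominating sequence of G_f choose a footprint u_i
   dominated by at most one earlier entry t_j. The links i -> j form a forest, so one colour class
   of a proper 2-colouring contains at least half of the entries, and within it every u_i is a
   private neighbour. This subsequence is legal in G_f, stays legal when projected to G because
   the neighbourhoods of G_f are the preimages of those of G, and extends to a dominating
   sequence of G. *)

lemma cnbh_self [simp]: "v \<in> cnbh V E v"
  by (simp add: cnbh_def)

lemma cnbh_subset: "simple_graph V E \<Longrightarrow> v \<in> V \<Longrightarrow> cnbh V E v \<subseteq> V"
  by (auto simp: cnbh_def simple_graph_def)

lemma cnbh_sym:
  "simple_graph V E \<Longrightarrow> u \<in> V \<Longrightarrow> v \<in> V \<Longrightarrow> u \<in> cnbh V E v \<longleftrightarrow> v \<in> cnbh V E u"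
  by (auto simp: cnbh_def simple_graph_def)

lemma legal_seq_iff_private_neighbours:
  "legal_seq V E s \<longleftrightarrow> set s \<subseteq> V \<and>
     (\<forall>i < length s. \<exists>w \<in> cnbh V E (s ! i). \<forall>j < i. w \<notin> cnbh V E (s ! j))"
    (is "_ \<longleftrightarrow> _ \<and> ?private")
proof
  assume legal: "legal_seq V E s"
  have "\<exists>w \<in> cnbh V E (s ! i). \<forall>j < i. w \<notin> cnbh V E (s ! j)" if "i < length s" for i
  proof (cases "i = 0")
    case True
    then show ?thesis by (metis cnbh_self not_less0)
  next
    case False
    then have "cnbh V E (s ! i) - (\<Union>j<i. cnbh V E (s ! j)) \<noteq> {}"
      using legal that by (simp add: legal_seq_def)
    then show ?thesis by blast
  qed
  then show "set s \<subseteq> V \<and> ?private"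
    using legal by (auto simp: legal_seq_def)
next
  assume priv: "set s \<subseteq> V \<and> ?private"
  have "distinct s"
    unfolding distinct_conv_nth
  proof (intro allI impI)
    fix i j assume "i < length s" "j < length s" "i \<noteq> j"
    then show "s ! i \<noteq> s ! j"
      using priv by (metis linorder_neqE_nat)
  qed
  moreover have "cnbh V E (s ! i) - (\<Union>j<i. cnbh V E (s ! j)) \<noteq> {}" if "i < length s" for i
    using priv that by blast
  ultimately show "legal_seq V E s"
    using priv by (simp add: legal_seq_def)
qed

lemma legal_seq_snoc:
  "legal_seq V E (s @ [x]) \<longleftrightarrow> legal_seq V E s \<and> x \<in> V \<and>
     (\<exists>w \<in> cnbh V E x. \<forall>v \<in> set s. w \<notin> cnbh V E v)"
  unfolding legal_seq_iff_private_neighbours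
  by (auto simp: nth_append less_Suc_eq all_conj_distrib all_set_conv_all_nth)

lemma legal_seq_extends_to_dominating_seq:
  assumes "finite V" and "legal_seq V E s"
  shows "\<exists>s'. dominating_seq V E s' \<and> length s \<le> length s'"
  using assms(2)
proof (induction "card V - length s" arbitrary: s rule: less_induct)
  case less
  show ?case
  proof (cases "dominating_seq V E s")
    case True
    then show ?thesis by blast
  next
    case False
    then obtain w where w: "w \<in> V" "\<forall>v \<in> set s. w \<notin> cnbh V E v"
      using less.prems by (auto simp: dominating_seq_def)
    then have legal: "legal_seq V E (s @ [w])"
      using less.prems cnbh_self legal_seq_snoc by metis
    then have "card (set (s @ [w])) \<le> card V"
      using assms(1) by (intro card_mono) (auto simp: legal_seq_def)
    then have "card V - length (s @ [w]) < card V - length s"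
      using legal by (simp add: legal_seq_def distinct_card)
    then show ?thesis
      using less.hyps[OF _ legal] by fastforce
  qed
qed

lemma legal_seq_index_subseq:
  assumes "set t \<subseteq> V" and "I \<subseteq> {..<length t}"
    and "\<And>i. i \<in> I \<Longrightarrow> u i \<in> cnbh V E (t ! i)"
    and "\<And>i j. i \<in> I \<Longrightarrow> j \<in> I \<Longrightarrow> j < i \<Longrightarrow> u i \<notin> cnbh V E (t ! j)"
  shows "legal_seq V E (map ((!) t) (sorted_list_of_set I))"
proof -
  let ?ixs = "sorted_list_of_set I"
  have "finite I" using assms(2) finite_subset by blast
  then have ixs: "set ?ixs = I" "sorted_wrt (<) ?ixs"
    by (simp_all add: strict_sorted_list_of_set)
  have "set (map ((!) t) ?ixs) \<subseteq> V"
    using ixs(1) assms(1,2) by (auto dest: nth_mem)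
  moreover have "\<exists>w \<in> cnbh V E (t ! (?ixs ! b)). \<forall>a < b. w \<notin> cnbh V E (t ! (?ixs ! a))"
    if b: "b < length ?ixs" for b
  proof (intro bexI[of _ "u (?ixs ! b)"] allI impI)
    show "u (?ixs ! b) \<in> cnbh V E (t ! (?ixs ! b))"
      using assms(3) ixs(1) b by (metis nth_mem)
    fix a assume "a < b"
    then show "u (?ixs ! b) \<notin> cnbh V E (t ! (?ixs ! a))"
      using assms(4) ixs b sorted_wrt_nth_less[OF ixs(2)] by (metis nth_mem order.strict_trans)
  qed
  ultimately show ?thesis
    unfolding legal_seq_iff_private_neighbours by simp
qed

lemma double_nbh_seq_snoc:
  "double_nbh_seq V E (s @ [x]) \<longleftrightarrow> double_nbh_seq V E s \<and> x \<notin> set s \<and> x \<in> V \<and>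
     (\<exists>u \<in> cnbh V E x. card {j. j < length s \<and> u \<in> cnbh V E (s ! j)} \<le> 1)"
proof -
  have "{j. j < i \<and> u \<in> cnbh V E ((s @ [x]) ! j)} = {j. j < i \<and> u \<in> cnbh V E (s ! j)}"
    if "i \<le> length s" for i u
    using that by (auto simp: nth_append)
  then show ?thesis
    unfolding double_nbh_seq_def by (auto simp: nth_append less_Suc_eq all_conj_distrib)
qed

lemma parent_relation_two_colouring:
  assumes "\<And>i j. R i j \<Longrightarrow> j < i" and "\<And>i j k. R i j \<Longrightarrow> R i k \<Longrightarrow> j = k"
  shows "\<exists>c :: nat \<Rightarrow> bool. \<forall>i j. i < m \<longrightarrow> R i j \<longrightarrow> c i \<noteq> c j"
proof (induction m)
  case 0
  then show ?case by simp
next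
  case (Suc m)
  then obtain c :: "nat \<Rightarrow> bool" where c: "\<forall>i j. i < m \<longrightarrow> R i j \<longrightarrow> c i \<noteq> c j"
    by blast
  define c' where "c' = c(m := \<not> c (SOME j. R m j))"
  have "c' i \<noteq> c' j" if "i < Suc m" "R i j" for i j
  proof (cases "i = m")
    case True
    then have "(SOME j. R m j) = j" using that(2) assms(2) by (metis someI)
    then show ?thesis using True assms(1)[OF that(2)] by (simp add: c'_def)
  next
    case False
    then show ?thesis using c that assms(1)[OF that(2)] by (simp add: c'_def)
  qed
  then show ?case by blast
qed

lemma parent_relation_half_independent:
  assumes "\<And>i j. R i j \<Longrightarrow> j < i" and "\<And>i j k. R i j \<Longrightarrow> R i k \<Longrightarrow> j = k"
  shows "\<exists>I \<subseteq> {..<m}. m \<le> 2 * card I \<and> (\<forall>i \<in> I. \<forall>j \<in> I. \<not> R i j)"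
proof -
  from parent_relation_two_colouring[of R m, OF assms]
  obtain c :: "nat \<Rightarrow> bool" where c: "\<forall>i j. i < m \<longrightarrow> R i j \<longrightarrow> c i \<noteq> c j" ..
  let ?A = "{i. i < m \<and> c i}" and ?B = "{i. i < m \<and> \<not> c i}"
  have "?A \<union> ?B = {..<m}" "?A \<inter> ?B = {}" by auto
  then have m: "card ?A + card ?B = m"
    using card_Un_disjoint[of ?A ?B] by simp
  have indep: "\<forall>i \<in> ?A. \<forall>j \<in> ?A. \<not> R i j" "\<forall>i \<in> ?B. \<forall>j \<in> ?B. \<not> R i j"
    using c by auto
  show ?thesis
  proof (cases "card ?B \<le> card ?A")
    case True
    then show ?thesis using m indep(1) by (intro exI[of _ ?A] conjI) auto
  next
    case False
    then show ?thesis using m indep(2) by (intro exI[of _ ?B] conjI) auto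
  qed
qed

lemma double_nbh_seq_half_legal_subseq:
  assumes "double_nbh_seq V E t"
  shows "\<exists>s. legal_seq V E s \<and> length t \<le> 2 * length s"
proof -
  let ?m = "length t"
  obtain u where u: "\<And>i. i < ?m \<Longrightarrow> u i \<in> cnbh V E (t ! i)"
    and once: "\<And>i. i < ?m \<Longrightarrow> card {j. j < i \<and> u i \<in> cnbh V E (t ! j)} \<le> 1"
    using assms unfolding double_nbh_seq_def by metis
  define R where "R i j \<longleftrightarrow> i < ?m \<and> j < i \<and> u i \<in> cnbh V E (t ! j)" for i j
  have parent_less: "j < i" if "R i j" for i j
    using that by (simp add: R_def)
  have parent_unique: "j = k" if "R i j" "R i k" for i j k
  proof -
    have "{j, k} \<subseteq> {j. j < i \<and> u i \<in> cnbh V E (t ! j)}"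
      using that by (auto simp: R_def)
    then have "card {j, k} \<le> card {j. j < i \<and> u i \<in> cnbh V E (t ! j)}"
      by (rule card_mono[rotated]) simp
    also have "\<dots> \<le> 1"
      using once that(1) by (simp add: R_def)
    finally show ?thesis by (cases "j = k") auto
  qed
  have "\<exists>I \<subseteq> {..<?m}. ?m \<le> 2 * card I \<and> (\<forall>i \<in> I. \<forall>j \<in> I. \<not> R i j)"
    using parent_less parent_unique by (rule parent_relation_half_independent)
  then obtain I where I: "I \<subseteq> {..<?m}" "?m \<le> 2 * card I" "\<forall>i \<in> I. \<forall>j \<in> I. \<not> R i j"
    by auto
  have "legal_seq V E (map ((!) t) (sorted_list_of_set I))"
  proof (rule legal_seq_index_subseq[where u = u])
    show "set t \<subseteq> V" using assms by (simp add: double_nbh_seq_def)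
  qed (use I u in \<open>auto simp: R_def\<close>)
  then show ?thesis
    using I(2) by (intro exI[of _ "map ((!) t) (sorted_list_of_set I)"]) simp
qed

lemma finite_lengths_distinct_lists:
  assumes "finite A" and "\<And>s. s \<in> S \<Longrightarrow> distinct s \<and> set s \<subseteq> A"
  shows "finite (length ` S)"
  using finite_subset[OF _ finite_subset_distinct[OF assms(1)]] assms(2) by blast

lemma
  assumes "finite V"
  shows dominating_seq_length_le_gamma_gr:
      "dominating_seq V E s \<Longrightarrow> length s \<le> gamma_gr V E"
    and gamma_gr_attained: "\<exists>s. dominating_seq V E s \<and> length s = gamma_gr V E"
proof -
  have fin: "finite (length ` {s. dominating_seq V E s})"
    using assms by (rule finite_lengths_distinct_lists) (simp add: dominating_seq_def legal_seq_def)
  then show "dominating_seq V E s \<Longrightarrow> length s \<le> gamma_gr V E"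
    unfolding gamma_gr_def by (simp add: Max_ge)
  have "legal_seq V E []" by (simp add: legal_seq_def)
  then have "{s. dominating_seq V E s} \<noteq> {}"
    using legal_seq_extends_to_dominating_seq[OF assms] by blast
  then show "\<exists>s. dominating_seq V E s \<and> length s = gamma_gr V E"
    using Max_in[OF fin] unfolding gamma_gr_def
    by (metis (mono_tags) empty_is_image imageE mem_Collect_eq)
qed

lemma
  assumes "finite V"
  shows double_dominating_seq_length_le_gamma_gr2:
      "double_dominating_seq V E t \<Longrightarrow> length t \<le> gamma_gr2 V E"
    and gamma_gr2_attained:
      "double_dominating_seq V E t \<Longrightarrow> \<exists>t'. double_dominating_seq V E t' \<and> length t' = gamma_gr2 V E"
proof -
  have fin: "finite (length ` {t. double_dominating_seq V E t})"
    using assms by (rule finite_lengths_distinct_lists)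
      (simp add: double_dominating_seq_def double_nbh_seq_def)
  then show "double_dominating_seq V E t \<Longrightarrow> length t \<le> gamma_gr2 V E"
    unfolding gamma_gr2_def by (simp add: Max_ge)
  show "\<exists>t'. double_dominating_seq V E t' \<and> length t' = gamma_gr2 V E"
    if "double_dominating_seq V E t"
    using Max_in[OF fin] that unfolding gamma_gr2_def
    by (metis (mono_tags) empty_iff image_iff mem_Collect_eq)
qed

lemma blowup_cnbh_iff:
  assumes "x \<in> blowup_V V f" and "y \<in> blowup_V V f"
  shows "y \<in> cnbh (blowup_V V f) (blowup_E V E f) x \<longleftrightarrow> fst y \<in> cnbh V E (fst x)"
  using assms by (cases x; cases y) (auto simp: cnbh_def blowup_E_def blowup_V_def)

lemma blowup_cnbh_subset:
  "x \<in> blowup_V V f \<Longrightarrow> cnbh (blowup_V V f) (blowup_E V E f) x \<subseteq> blowup_V V f"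
  by (auto simp: cnbh_def)

lemma finite_blowup_V: "finite V \<Longrightarrow> finite (blowup_V V f)"
  by (rule finite_subset[of _ "SIGMA v:V. {1..f v + 1}"]) (auto simp: blowup_V_def)

lemma legal_seq_blowup_map_fst:
  assumes "legal_seq (blowup_V V f) (blowup_E V E f) t"
  shows "legal_seq V E (map fst t)"
proof -
  let ?W = "blowup_V V f" and ?N = "cnbh (blowup_V V f) (blowup_E V E f)"
  have t: "set t \<subseteq> ?W" using assms by (simp add: legal_seq_def)
  then have "set (map fst t) \<subseteq> V" by (auto simp: blowup_V_def)
  moreover have "\<exists>w \<in> cnbh V E (fst (t ! i)). \<forall>j < i. w \<notin> cnbh V E (fst (t ! j))"
    if i: "i < length t" for i
  proof -
    obtain y where y: "y \<in> ?N (t ! i)" "\<forall>j < i. y \<notin> ?N (t ! j)"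
      using assms i unfolding legal_seq_iff_private_neighbours by blast
    have "t ! i \<in> ?W" "\<And>j. j < i \<Longrightarrow> t ! j \<in> ?W"
      using t i by (auto dest: nth_mem)
    moreover have "y \<in> ?W"
      using y(1) blowup_cnbh_subset calculation(1) by blast
    ultimately show ?thesis
      using y blowup_cnbh_iff by metis
  qed
  ultimately show ?thesis
    unfolding legal_seq_iff_private_neighbours by simp
qed

definition doubled_seq :: "'a list \<Rightarrow> ('a \<times> nat) list" where
  "doubled_seq s = concat (map (\<lambda>v. [(v, 1), (v, 2)]) s)"

lemma doubled_seq_snoc: "doubled_seq (s @ [x]) = (doubled_seq s @ [(x, 1)]) @ [(x, 2)]"
  by (simp add: doubled_seq_def)

lemma set_doubled_seq: "set (doubled_seq s) = set s \<times> {1, 2}"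
  by (induction s) (auto simp: doubled_seq_def)

lemma length_doubled_seq: "length (doubled_seq s) = 2 * length s"
  by (induction s) (auto simp: doubled_seq_def)

lemma double_nbh_seq_doubled_seq:
  assumes "simple_graph V E" and "\<forall>v \<in> V. f v \<ge> 1" and "legal_seq V E s"
  shows "double_nbh_seq (blowup_V V f) (blowup_E V E f) (doubled_seq s)"
  using assms(3)
proof (induction s rule: rev_induct)
  case Nil
  then show ?case by (simp add: doubled_seq_def double_nbh_seq_def)
next
  case (snoc x xs)
  let ?W = "blowup_V V f" and ?F = "blowup_E V E f" and ?t = "doubled_seq xs"
  let ?N = "cnbh ?W ?F"
  obtain w where legal: "legal_seq V E xs" and "x \<in> V" "x \<notin> set xs"
    and w: "w \<in> cnbh V E x" "\<forall>v \<in> set xs. w \<notin> cnbh V E v"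
    using snoc.prems legal_seq_snoc[of V E xs x] by (auto simp: legal_seq_def)
  have copies: "(x, 1) \<in> ?W" "(x, 2) \<in> ?W" "(w, 1) \<in> ?W"
    using \<open>x \<in> V\<close> w(1) cnbh_subset[OF assms(1)] assms(2) by (auto simp: blowup_V_def)
  have fresh: "(x, 1) \<notin> set ?t" "(x, 2) \<notin> set (?t @ [(x, 1)])"
    using \<open>x \<notin> set xs\<close> by (auto simp: set_doubled_seq)
  have footprint: "(w, 1) \<in> ?N (x, 1)" "(w, 1) \<in> ?N (x, 2)"
    using blowup_cnbh_iff[OF copies(1) copies(3)] blowup_cnbh_iff[OF copies(2) copies(3)] w(1)
    by simp_all
  have "set ?t \<subseteq> ?W"
    using legal assms(2) by (auto simp: set_doubled_seq legal_seq_def blowup_V_def)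
  then have "(w, 1) \<notin> ?N y" if "y \<in> set ?t" for y
    using that w(2) blowup_cnbh_iff[OF _ copies(3), of y] by (auto simp: set_doubled_seq)
  then have undominated: "{j. j < length ?t \<and> (w, 1) \<in> ?N (?t ! j)} = {}"
    by (auto dest: nth_mem)
  have first_copy: "double_nbh_seq ?W ?F (?t @ [(x, 1)])"
  proof (unfold double_nbh_seq_snoc, intro conjI bexI[of _ "(w, 1)"])
    show "card {j. j < length ?t \<and> (w, 1) \<in> ?N (?t ! j)} \<le> 1"
      unfolding undominated by simp
  qed (use snoc.IH[OF legal] fresh(1) copies(1) footprint(1) in simp_all)
  have "{j. j < length (?t @ [(x, 1)]) \<and> (w, 1) \<in> ?N ((?t @ [(x, 1)]) ! j)} \<subseteq> {length ?t}"
    using undominated by (auto simp: nth_append less_Suc_eq)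
  then have dominated_once:
    "card {j. j < length (?t @ [(x, 1)]) \<and> (w, 1) \<in> ?N ((?t @ [(x, 1)]) ! j)} \<le> 1"
    using card_mono[OF finite.insertI[OF finite.emptyI]] by fastforce
  show ?case
    unfolding doubled_seq_snoc double_nbh_seq_snoc[of _ _ "?t @ [(x, 1)]"]
    using first_copy fresh(2) copies(2) footprint(2) dominated_once by blast
qed

lemma double_dominating_seq_doubled_seq:
  assumes "simple_graph V E" and "\<forall>v \<in> V. f v \<ge> 1" and "dominating_seq V E s"
  shows "double_dominating_seq (blowup_V V f) (blowup_E V E f) (doubled_seq s)"
  unfolding double_dominating_seq_def
proof
  let ?W = "blowup_V V f" and ?N = "cnbh (blowup_V V f) (blowup_E V E f)"
  show "double_nbh_seq ?W (blowup_E V E f) (doubled_seq s)"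
    using double_nbh_seq_doubled_seq[OF assms(1,2)] assms(3) by (simp add: dominating_seq_def)
  show "\<forall>y \<in> ?W. 2 \<le> card (?N y \<inter> set (doubled_seq s))"
  proof
    fix y assume y: "y \<in> ?W"
    then have "fst y \<in> V" by (auto simp: blowup_V_def)
    then obtain v where v: "v \<in> set s" "fst y \<in> cnbh V E v"
      using assms(3) by (auto simp: dominating_seq_def)
    have "v \<in> V" using v(1) assms(3) by (auto simp: dominating_seq_def legal_seq_def)
    then have copies: "(v, 1) \<in> ?W" "(v, 2) \<in> ?W"
      using assms(2) by (auto simp: blowup_V_def)
    have "v \<in> cnbh V E (fst y)"
      using v(2) cnbh_sym[OF assms(1) \<open>fst y \<in> V\<close> \<open>v \<in> V\<close>] by simp
    then have "{(v, 1), (v, 2)} \<subseteq> ?N y \<inter> set (doubled_seq s)"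
      using blowup_cnbh_iff[OF y copies(1)] blowup_cnbh_iff[OF y copies(2)] v(1)
      by (auto simp: set_doubled_seq)
    from card_mono[OF _ this] show "2 \<le> card (?N y \<inter> set (doubled_seq s))" by simp
  qed
qed

theorem proposition6:
  fixes V :: "'a set" and E :: "'a \<Rightarrow> 'a \<Rightarrow> bool" and f :: "'a \<Rightarrow> nat"
  assumes "simple_graph V E" and "V \<noteq> {}" and "\<forall>v \<in> V. f v \<ge> 1"
  shows "2 * gamma_gr V E = gamma_gr2 (blowup_V V f) (blowup_E V E f)"
proof -
  let ?W = "blowup_V V f" and ?F = "blowup_E V E f"
  have fin: "finite V" "finite ?W"
    using assms(1) finite_blowup_V by (auto simp: simple_graph_def)
  obtain s where s: "dominating_seq V E s" "length s = gamma_gr V E"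
    using gamma_gr_attained[OF fin(1)] by blast
  have doubled: "double_dominating_seq ?W ?F (doubled_seq s)"
    using double_dominating_seq_doubled_seq assms(1,3) s(1) by blast
  then have lower: "2 * gamma_gr V E \<le> gamma_gr2 ?W ?F"
    using double_dominating_seq_length_le_gamma_gr2[OF fin(2)] s(2) length_doubled_seq by metis
  obtain t where t: "double_dominating_seq ?W ?F t" "length t = gamma_gr2 ?W ?F"
    using gamma_gr2_attained[OF fin(2) doubled] by blast
  then obtain s' where s': "legal_seq ?W ?F s'" "length t \<le> 2 * length s'"
    using double_nbh_seq_half_legal_subseq by (metis double_dominating_seq_def)
  obtain s'' where "dominating_seq V E s''" "length (map fst s') \<le> length s''"
    using legal_seq_extends_to_dominating_seq[OF fin(1) legal_seq_blowup_map_fst[OF s'(1)]]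
    by blast
  then have upper: "gamma_gr2 ?W ?F \<le> 2 * gamma_gr V E"
    using dominating_seq_length_le_gamma_gr[OF fin(1)] t(2) s'(2) by fastforce
  from lower upper show ?thesis by linarith
qed

end
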